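(* Let $M$ be a magma satisfying $(xy)z = xz$ and $x(yz) = xx$ for all $x,y,z\in M$. Then $M$ satisfies $xy = xz$ and $(xy)z = xy$ for all $x,y,z\in M$ if and only if $M$ avoids the magma $D$ on $\{0,1,2,3\}$ with Cayley table \[ \begin{array}{c|cccc} D & 0 & 1 & 2 & 3 \\ \hline 0 & 0 & 2 & 0 & 0 \\ 1 & 3 & 3 & 3 & 3 \\ 2 & 0 & 2 & 0 & 0 \\ 3 & 3 & 3 & 3 & 3 \end{array}. \]
   Context: A magma is a nonempty set with a binary operation, written by juxtaposition. A magma $M$ avoids a magma $F$ if no submagma of $M$ is isomorphic to $F$. In the Cayley table, the entry in row $i$, column $j$ is $i\cdot j$. *)

theory Defs
  imports Main
begin

definition magma :: "'a set \<Rightarrow> ('a \<Rightarrow> 'a \<Rightarrow> 'a) \<Rightarrow> bool" where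
  "magma A f \<longleftrightarrow> A \<noteq> {} \<and> (\<forall>x\<in>A. \<forall>y\<in>A. f x y \<in> A)"

definition submagma :: "'a set \<Rightarrow> ('a \<Rightarrow> 'a \<Rightarrow> 'a) \<Rightarrow> 'a set \<Rightarrow> bool" where
  "submagma S f A \<longleftrightarrow> S \<subseteq> A \<and> magma S f"

definition magma_iso ::
  "('b \<Rightarrow> 'a) \<Rightarrow> 'b set \<Rightarrow> ('b \<Rightarrow> 'b \<Rightarrow> 'b) \<Rightarrow> 'a set \<Rightarrow> ('a \<Rightarrow> 'a \<Rightarrow> 'a) \<Rightarrow> bool" where
  "magma_iso h B g A f \<longleftrightarrow> bij_betw h B A \<and> (\<forall>x\<in>B. \<forall>y\<in>B. h (g x y) = f (h x) (h y))"

definition avoids ::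
  "'a set \<Rightarrow> ('a \<Rightarrow> 'a \<Rightarrow> 'a) \<Rightarrow> 'b set \<Rightarrow> ('b \<Rightarrow> 'b \<Rightarrow> 'b) \<Rightarrow> bool" where
  "avoids A f B g \<longleftrightarrow> \<not> (\<exists>S. submagma S f A \<and> (\<exists>h. magma_iso h B g S f))"

definition D_op :: "nat \<Rightarrow> nat \<Rightarrow> nat" where
  "D_op i j = (if i = 1 \<or> i = 3 then 3 else (if j = 1 then 2 else 0))"

definition D_carrier :: "nat set" where
  "D_carrier = {0, 1, 2, 3}"

end

theory Submission
  imports Defs
begin

text \<open>In D the product 0 1 = 2 differs from 0 0 = 0, so no magma satisfying x y = x z contains
  a copy of D. Conversely, under (x y) z = x z and x (y z) = x x, any a, b determine a
  homomorphic image of D, namely i \<mapsto> (a a, b, a b, b b) ! i. The only proper quotients of D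
  identify 0 with 2, so this image is a copy of D as soon as a b \<noteq> a a; avoiding D therefore
  forces x y = x x = x z, and then (x y) z = x z = x y.\<close>

lemma magma_D: "magma D_carrier D_op"
  unfolding magma_def D_carrier_def D_op_def by auto

lemma submagma_hom_image:
  assumes "magma B g" and "h ` B \<subseteq> A"
    and "\<forall>x\<in>B. \<forall>y\<in>B. h (g x y) = f (h x) (h y)"
  shows "submagma (h ` B) f A"
proof -
  have "f u v \<in> h ` B" if "u \<in> h ` B" "v \<in> h ` B" for u v
  proof -
    from that obtain x y where "x \<in> B" "y \<in> B" "u = h x" "v = h y"
      by blast
    with assms(1,3) show ?thesis
      unfolding magma_def by (metis image_eqI)
  qed
  with assms(1,2) show ?thesis
    unfolding submagma_def magma_def by blast
qed

lemma not_avoids_if_inj_hom: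
  assumes "magma B g" and "h ` B \<subseteq> A" and "inj_on h B"
    and "\<forall>x\<in>B. \<forall>y\<in>B. h (g x y) = f (h x) (h y)"
  shows "\<not> avoids A f B g"
proof -
  have "submagma (h ` B) f A"
    using assms(1,2,4) by (rule submagma_hom_image)
  moreover have "magma_iso h B g (h ` B) f"
    unfolding magma_iso_def using assms(3,4) by (simp add: inj_on_imp_bij_betw)
  ultimately show ?thesis
    unfolding avoids_def by blast
qed

lemma magma_iso_reflects_left_constant:
  assumes "magma B g" and iso: "magma_iso h B g S f"
    and left_const: "\<forall>x\<in>S. \<forall>y\<in>S. \<forall>z\<in>S. f x y = f x z"
    and x: "x \<in> B" and y: "y \<in> B" and z: "z \<in> B"
  shows "g x y = g x z"
proof -
  have bij: "bij_betw h B S" and hom: "\<forall>x\<in>B. \<forall>y\<in>B. h (g x y) = f (h x) (h y)"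
    using iso unfolding magma_iso_def by auto
  have "h x \<in> S" "h y \<in> S" "h z \<in> S"
    using bij_betwE[OF bij] x y z by auto
  then have "f (h x) (h y) = f (h x) (h z)"
    using left_const by blast
  then have "h (g x y) = h (g x z)"
    using hom x y z by simp
  moreover have "g x y \<in> B" "g x z \<in> B"
    using \<open>magma B g\<close> x y z unfolding magma_def by blast+
  ultimately show ?thesis
    using bij_betw_imp_inj_on[OF bij] by (simp add: inj_on_eq_iff)
qed

lemma avoids_D_if_left_constant:
  assumes "\<forall>x\<in>M. \<forall>y\<in>M. \<forall>z\<in>M. f x y = f x z"
  shows "avoids M f D_carrier D_op"
  unfolding avoids_def
proof
  assume "\<exists>S. submagma S f M \<and> (\<exists>h. magma_iso h D_carrier D_op S f)"
  then obtain S h where S: "submagma S f M" and iso: "magma_iso h D_carrier D_op S f"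
    by blast
  have "\<forall>x\<in>S. \<forall>y\<in>S. \<forall>z\<in>S. f x y = f x z"
    using S assms unfolding submagma_def by blast
  with magma_D iso have "D_op 0 1 = D_op 0 0"
    by (rule magma_iso_reflects_left_constant) (simp_all add: D_carrier_def)
  then show False
    by (simp add: D_op_def)
qed

lemma inj_on_D_hom:
  assumes hom: "\<forall>x\<in>D_carrier. \<forall>y\<in>D_carrier. h (D_op x y) = f (h x) (h y)"
    and "h 0 \<noteq> h 2"
  shows "inj_on h D_carrier"
proof -
  have table: "f (h 0) (h 0) = h 0" "f (h 0) (h 1) = h 2" "f (h 0) (h 2) = h 0"
    "f (h 0) (h 3) = h 0" "f (h 2) (h 0) = h 0" "f (h 3) (h 0) = h 3" "f (h 3) (h 1) = h 3"
    using hom[rule_format, symmetric] by (simp_all add: D_carrier_def D_op_def)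
  show ?thesis
    unfolding inj_on_def D_carrier_def using assms(2) table by auto
qed

definition D_map :: "('a \<Rightarrow> 'a \<Rightarrow> 'a) \<Rightarrow> 'a \<Rightarrow> 'a \<Rightarrow> nat \<Rightarrow> 'a" where
  "D_map f a b i = [f a a, b, f a b, f b b] ! i"

lemma D_map_hom:
  assumes closed: "\<And>x y. x \<in> M \<Longrightarrow> y \<in> M \<Longrightarrow> f x y \<in> M"
    and left_absorb: "\<And>x y z. x \<in> M \<Longrightarrow> y \<in> M \<Longrightarrow> z \<in> M \<Longrightarrow> f (f x y) z = f x z"
    and right_square: "\<And>x y z. x \<in> M \<Longrightarrow> y \<in> M \<Longrightarrow> z \<in> M \<Longrightarrow> f x (f y z) = f x x"
    and "a \<in> M" "b \<in> M"
  shows "\<forall>x\<in>D_carrier. \<forall>y\<in>D_carrier.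
           D_map f a b (D_op x y) = f (D_map f a b x) (D_map f a b y)"
  using left_absorb right_square[OF \<open>a \<in> M\<close>] right_square[OF \<open>b \<in> M\<close>] closed assms(4,5)
  by (auto simp: D_map_def D_carrier_def D_op_def)

lemma left_constant_if_avoids_D:
  assumes closed: "\<And>x y. x \<in> M \<Longrightarrow> y \<in> M \<Longrightarrow> f x y \<in> M"
    and left_absorb: "\<And>x y z. x \<in> M \<Longrightarrow> y \<in> M \<Longrightarrow> z \<in> M \<Longrightarrow> f (f x y) z = f x z"
    and right_square: "\<And>x y z. x \<in> M \<Longrightarrow> y \<in> M \<Longrightarrow> z \<in> M \<Longrightarrow> f x (f y z) = f x x"
    and avoids: "avoids M f D_carrier D_op"
    and "a \<in> M" "b \<in> M"
  shows "f a b = f a a"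
proof (rule ccontr)
  assume ne: "f a b \<noteq> f a a"
  have hom: "\<forall>x\<in>D_carrier. \<forall>y\<in>D_carrier.
      D_map f a b (D_op x y) = f (D_map f a b x) (D_map f a b y)"
    using closed left_absorb right_square \<open>a \<in> M\<close> \<open>b \<in> M\<close> by (rule D_map_hom)
  have "D_map f a b ` D_carrier \<subseteq> M"
    using closed \<open>a \<in> M\<close> \<open>b \<in> M\<close> by (auto simp: D_map_def D_carrier_def)
  moreover have "inj_on (D_map f a b) D_carrier"
    using hom by (rule inj_on_D_hom) (use ne in \<open>simp add: D_map_def\<close>)
  ultimately have "\<not> avoids M f D_carrier D_op"
    using magma_D hom by (intro not_avoids_if_inj_hom)
  then show False
    using avoids by contradiction
qed

theorem mainTheorem14:
  fixes M :: "'a set" and mult :: "'a \<Rightarrow> 'a \<Rightarrow> 'a"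
  assumes "magma M mult"
    and "\<forall>x\<in>M. \<forall>y\<in>M. \<forall>z\<in>M. mult (mult x y) z = mult x z"
    and "\<forall>x\<in>M. \<forall>y\<in>M. \<forall>z\<in>M. mult x (mult y z) = mult x x"
  shows "((\<forall>x\<in>M. \<forall>y\<in>M. \<forall>z\<in>M. mult x y = mult x z)
          \<and> (\<forall>x\<in>M. \<forall>y\<in>M. \<forall>z\<in>M. mult (mult x y) z = mult x y))
         \<longleftrightarrow> avoids M mult D_carrier D_op"
proof
  assume "(\<forall>x\<in>M. \<forall>y\<in>M. \<forall>z\<in>M. mult x y = mult x z)
          \<and> (\<forall>x\<in>M. \<forall>y\<in>M. \<forall>z\<in>M. mult (mult x y) z = mult x y)"
  then show "avoids M mult D_carrier D_op"
    using avoids_D_if_left_constant by blast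
next
  assume avoids: "avoids M mult D_carrier D_op"
  have closed: "\<And>x y. x \<in> M \<Longrightarrow> y \<in> M \<Longrightarrow> mult x y \<in> M"
    using assms(1) unfolding magma_def by blast
  have left_constant: "mult x y = mult x x" if "x \<in> M" "y \<in> M" for x y
    using left_constant_if_avoids_D[OF closed _ _ avoids that] assms(2,3) by blast
  show "(\<forall>x\<in>M. \<forall>y\<in>M. \<forall>z\<in>M. mult x y = mult x z)
          \<and> (\<forall>x\<in>M. \<forall>y\<in>M. \<forall>z\<in>M. mult (mult x y) z = mult x y)"
    using left_constant assms(2) closed by metis
qed

end
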